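(* Let $(M,d)$ be a metric space in which any two points $A,B\in M$ are joined by a unique metric segment $[A,B]$. Then the following two conditions are equivalent. Condition (A): for any three distinct points $A,B,C\in M$ there exists a unique $O\in M$ such that $\{X,Y\}\subset\mathcal C_d(Z,O)$ for all distinct $X,Y,Z\in\{A,B,C\}$. Condition (B): for any three distinct points $A,B,C\in M$ there exists $O\in M$ such that $[A,B]\cap[B,C]\cap[A,C]=\{O\}$.
   Context: For a metric space $(M,d)$ and $A,B\in M$, the metric segment is $[A,B]=\{X\in M:\ d(A,X)+d(X,B)=d(A,B)<+\infty\}$. For $A,B\in M$, $\mathcal C_d(A,B)=\{X\in M:\ d(X,A)=d(X,B)+d(A,B)<+\infty\}$. *)

theory Defs
  imports "HOL-Analysis.Analysis"
begin

definition metric_segment :: "'a set \<Rightarrow> ('a \<Rightarrow> 'a \<Rightarrow> real) \<Rightarrow> 'a \<Rightarrow> 'a \<Rightarrow> 'a set" where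
  "metric_segment M d A B = {X \<in> M. d A X + d X B = d A B}"

definition Cd :: "'a set \<Rightarrow> ('a \<Rightarrow> 'a \<Rightarrow> real) \<Rightarrow> 'a \<Rightarrow> 'a \<Rightarrow> 'a set" where
  "Cd M d A B = {X \<in> M. d X A = d X B + d A B}"

end

theory Submission
  imports Defs
begin

text \<open>For distinct \<open>A, B, C\<close> a point \<open>O\<close> satisfies the \<open>\<C>\<^sub>d\<close>-condition of (A) exactly
  when it lies on all three segments \<open>[A,B], [B,C], [A,C]\<close>, because \<open>X \<in> \<C>\<^sub>d(Z,O)\<close> says
  \<open>d(X,Z) = d(X,O) + d(O,Z)\<close>. So unique existence of \<open>O\<close> in (A) and the intersection of the
  segments being a singleton in (B) coincide triangle by triangle.\<close>

lemma metric_segment_commute: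
  assumes "Metric_space M d"
  shows "metric_segment M d A B = metric_segment M d B A"
  using Metric_space.commute[OF assms] unfolding metric_segment_def by auto

lemma mem_Cd_iff_mem_metric_segment:
  assumes "Metric_space M d" and "X \<in> M" and "P \<in> M"
  shows "X \<in> Cd M d Z P \<longleftrightarrow> P \<in> metric_segment M d X Z"
  using Metric_space.commute[OF assms(1)] assms(2,3)
  unfolding Cd_def metric_segment_def by auto

lemma Cd_centre_iff_mem_metric_segments:
  assumes "Metric_space M d" and "A \<in> M" "B \<in> M" "C \<in> M"
    and "A \<noteq> B" "B \<noteq> C" "A \<noteq> C"
  shows "(P \<in> M \<and>
           (\<forall>X\<in>{A,B,C}. \<forall>Y\<in>{A,B,C}. \<forall>Z\<in>{A,B,C}.
              X \<noteq> Y \<and> Y \<noteq> Z \<and> X \<noteq> Z \<longrightarrow> {X, Y} \<subseteq> Cd M d Z P))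
    \<longleftrightarrow> P \<in> metric_segment M d A B \<inter> metric_segment M d B C \<inter> metric_segment M d A C"
    (is "P \<in> M \<and> ?centre \<longleftrightarrow> _")
proof
  assume centre: "P \<in> M \<and> ?centre"
  then have "{A, C} \<subseteq> Cd M d B P" "{B, A} \<subseteq> Cd M d C P"
    using assms(5-7) by auto
  then show "P \<in> metric_segment M d A B \<inter> metric_segment M d B C \<inter> metric_segment M d A C"
    using centre mem_Cd_iff_mem_metric_segment[OF assms(1)] assms(2,3) by auto
next
  assume segments: "P \<in> metric_segment M d A B \<inter> metric_segment M d B C \<inter> metric_segment M d A C"
  then have "P \<in> M"
    unfolding metric_segment_def by blast
  have "P \<in> metric_segment M d X Z" if "X \<in> {A,B,C}" "Z \<in> {A,B,C}" "X \<noteq> Z" for X Z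
    using that segments metric_segment_commute[OF assms(1)] by auto
  then have "X \<in> Cd M d Z P" if "X \<in> {A,B,C}" "Z \<in> {A,B,C}" "X \<noteq> Z" for X Z
    using that mem_Cd_iff_mem_metric_segment[OF assms(1) _ \<open>P \<in> M\<close>] assms(2-4) by blast
  with \<open>P \<in> M\<close> show "P \<in> M \<and> ?centre"
    by blast
qed

lemma ex1_mem_iff_singleton:
  assumes "S \<subseteq> M"
  shows "(\<exists>!x. x \<in> S) \<longleftrightarrow> (\<exists>x\<in>M. S = {x})"
  using assms by auto

theorem lemma2p1:
  fixes M :: "'a set" and d :: "'a \<Rightarrow> 'a \<Rightarrow> real"
  assumes "Metric_space M d"
  shows "(\<forall>A\<in>M. \<forall>B\<in>M. \<forall>C\<in>M. A \<noteq> B \<and> B \<noteq> C \<and> A \<noteq> C \<longrightarrow>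
            (\<exists>!P. P \<in> M \<and>
               (\<forall>X\<in>{A,B,C}. \<forall>Y\<in>{A,B,C}. \<forall>Z\<in>{A,B,C}.
                  X \<noteq> Y \<and> Y \<noteq> Z \<and> X \<noteq> Z \<longrightarrow> {X, Y} \<subseteq> Cd M d Z P)))
     \<longleftrightarrow>
         (\<forall>A\<in>M. \<forall>B\<in>M. \<forall>C\<in>M. A \<noteq> B \<and> B \<noteq> C \<and> A \<noteq> C \<longrightarrow>
            (\<exists>P\<in>M. metric_segment M d A B \<inter> metric_segment M d B C \<inter> metric_segment M d A C = {P}))"
proof (intro ball_cong refl imp_cong)
  fix A B C
  assume triangle: "A \<in> M" "B \<in> M" "C \<in> M" "A \<noteq> B \<and> B \<noteq> C \<and> A \<noteq> C"
  have centre_iff_mem_segments: "(P \<in> M \<and>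
           (\<forall>X\<in>{A,B,C}. \<forall>Y\<in>{A,B,C}. \<forall>Z\<in>{A,B,C}.
              X \<noteq> Y \<and> Y \<noteq> Z \<and> X \<noteq> Z \<longrightarrow> {X, Y} \<subseteq> Cd M d Z P))
    \<longleftrightarrow> P \<in> metric_segment M d A B \<inter> metric_segment M d B C \<inter> metric_segment M d A C" for P
    using triangle(4) by (intro Cd_centre_iff_mem_metric_segments[OF assms triangle(1-3)]) auto
  have "metric_segment M d A B \<inter> metric_segment M d B C \<inter> metric_segment M d A C \<subseteq> M"
    unfolding metric_segment_def by blast
  then show "(\<exists>!P. P \<in> M \<and>
           (\<forall>X\<in>{A,B,C}. \<forall>Y\<in>{A,B,C}. \<forall>Z\<in>{A,B,C}.
              X \<noteq> Y \<and> Y \<noteq> Z \<and> X \<noteq> Z \<longrightarrow> {X, Y} \<subseteq> Cd M d Z P))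
    \<longleftrightarrow> (\<exists>P\<in>M. metric_segment M d A B \<inter> metric_segment M d B C \<inter> metric_segment M d A C = {P})"
    unfolding centre_iff_mem_segments by (rule ex1_mem_iff_singleton)
qed

end
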